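(* Let $\mu=-1$ and $p_{0x}=p_{01}=p_{x1}=-7$, and let $\nu>0$ and $d$ be defined from these monodromy data by the formulas in the context. Let $\mathbf G=\frac{1+\sqrt5}2$ be the golden ratio. Then $$\nu=\frac{2\ln\mathbf G}{\pi}=0.3063489625\ldots,$$ $$d=\frac i2\ln\Big\{-\pi^2\frac{(\mathbf G^4+1)^2}{(\mathbf G^2+1)^2}\,2^{16i\nu}\,\frac{(1-2i\nu)^2\nu^2}{(1+2i\nu)^2}\,\frac{\Gamma(1-2i\nu)^4}{\Gamma(1-i\nu)^8}\Big\},$$ and this can also be written as the series, absolutely convergent for $|\nu|<\frac12$ (hence valid at $\nu=2\ln\mathbf G/\pi$), $$d=\frac\pi2-8\nu\ln2+2\arccos\frac1{\sqrt{1+4\nu^2}}+4\sum_{n=1}^\infty\frac{(-1)^n(1-4^n)\zeta(2n+1)}{2n+1}\nu^{2n+1}+i\frac\pi2\nu+k\pi,\qquad k\in\mathbb Z,$$ where $2\arccos\frac1{\sqrt{1+4\nu^2}}=2\sum_{n=0}^\infty(-1)^n(2\nu)^{2n+1}$ for $|\nu|<\frac12$.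
   Context: For $PVI_\mu$ (the Painlevé VI equation with parameters $\alpha=(2\mu-1)^2/2$, $\beta=\gamma=0$, $\delta=1/2$), branches near $x=0$ of the form $\frac1{y(x)}=\sum_{n\ge1}x^{n-1}\sum_{m=-n}^nA_{nm}(\nu,\mu)e^{2imd}x^{2im\nu}$ (with $\nu>0$, $d\in\mathbb C$) correspond to monodromy data $(\mu,p_{0x},p_{01},p_{x1})$ of the associated isomonodromic Fuchsian system with $p_{0x}<-2$, and the integration constants are given by $p_{0x}=-2\cosh(2\pi\nu)$, $\nu>0$, and (when $2\mu\neq 2i\nu+2m+1$, $m\in\mathbb Z$) $$d=\frac i2\ln\Big\{-\frac{4\cdot16^{2i\nu}\,\Gamma(\frac32-\mu-i\nu)^2\,\Gamma(\mu+\frac12-i\nu)^2}{(2\nu+i(1-2\mu))^2\nu^2\sinh(2\pi\nu)^2\Gamma(-i\nu)^4}\Big[\tfrac12\big(e^{2\pi\nu}p_{x1}-p_{01}\big)\sinh(2\pi\nu)+\big(\cos(2\pi\mu)+1\big)\big(e^{2\pi\nu}+1\big)\Big]\Big\},$$ $d$ being defined modulo $\pi$ (choice of branch of the logarithm). The branch associated with the quantum cohomology of $\mathbb{CP}^2$ corresponds to $\mu=-1$, $p_{0x}=p_{01}=p_{x1}=-7$. *)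

theory Defs
  imports "HOL-Analysis.Analysis"
begin

definition golden :: real where "golden = (1 + sqrt 5) / 2"

definition rzeta :: "real \<Rightarrow> real" where
  "rzeta s = (\<Sum>k. 1 / (real (Suc k)) powr s)"

text \<open>The integration constant nu > 0 determined by p0x = -2 cosh(2 pi nu) (for p0x < -2).\<close>
definition PVI_nu :: "real \<Rightarrow> real" where
  "PVI_nu p0x = (THE \<nu>. \<nu> > 0 \<and> p0x = - 2 * cosh (2 * pi * \<nu>))"

definition PVI_d_arg :: "complex \<Rightarrow> complex \<Rightarrow> complex \<Rightarrow> real \<Rightarrow> complex" where
  "PVI_d_arg \<mu> p01 px1 \<nu> =
     - (4 * 16 powr (2 * \<i> * of_real \<nu>) * Gamma (3/2 - \<mu> - \<i> * of_real \<nu>) ^ 2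
          * Gamma (\<mu> + 1/2 - \<i> * of_real \<nu>) ^ 2)
       / ((2 * of_real \<nu> + \<i> * (1 - 2 * \<mu>)) ^ 2 * of_real (\<nu> ^ 2)
          * of_real (sinh (2 * pi * \<nu>) ^ 2) * Gamma (- \<i> * of_real \<nu>) ^ 4)
     * (1/2 * (of_real (exp (2 * pi * \<nu>)) * px1 - p01) * of_real (sinh (2 * pi * \<nu>))
        + (cos (2 * of_real pi * \<mu>) + 1) * (of_real (exp (2 * pi * \<nu>)) + 1))"

definition half_i_log_values :: "complex \<Rightarrow> complex set" where
  "half_i_log_values Z = {\<i> / 2 * (Ln Z + 2 * of_real pi * \<i> * of_int k) | k :: int. True}"

definition PVI_d_values :: "complex \<Rightarrow> real \<Rightarrow> complex \<Rightarrow> complex \<Rightarrow> complex set" where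
  "PVI_d_values \<mu> p0x p01 px1 = half_i_log_values (PVI_d_arg \<mu> p01 px1 (PVI_nu p0x))"

definition d_series_term :: "real \<Rightarrow> nat \<Rightarrow> real" where
  "d_series_term \<nu> n = (-1) ^ n * (1 - 4 ^ n) * rzeta (2 * n + 1) / (2 * n + 1) * \<nu> ^ (2 * n + 1)"

end

theory Submission
  imports Defs
begin

text \<open>For the golden ratio \<open>G\<close> and \<open>\<nu> = 2 ln G / \<pi>\<close> we have \<open>e\<^sup>2\<^sup>\<pi>\<^sup>\<nu> = G\<^sup>4\<close>, and
  \<open>G\<^sup>8 + 1 = 7 G\<^sup>4\<close> gives \<open>-2 cosh (2\<pi>\<nu>) = -7\<close>. At \<open>\<mu> = -1\<close> the functional equation and Legendre's
  duplication formula turn the Gamma factors of the argument of the logarithm into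
  \<open>\<Gamma>(1 - 2i\<nu>)\<^sup>4 / \<Gamma>(1 - i\<nu>)\<^sup>8\<close>. The reflection formula gives its modulus,
  \<open>(tanh (\<pi>\<nu>) / (\<pi>\<nu>))\<^sup>2\<close>; the Weierstrass product gives its argument as
  \<open>\<Sum>\<^sub>k 4 arctan (2\<nu>/k) - 8 arctan (\<nu>/k)\<close>, and expanding the arctangents and summing over \<open>k\<close> first
  (an absolutely convergent double series for \<open>|\<nu>| < 1/2\<close>) produces the odd zeta values. At the golden
  ratio the modulus of the whole argument of the logarithm is \<open>e\<^sup>\<pi>\<^sup>\<nu>\<close>, so it equals \<open>exp (-2 i d)\<close> with
  \<open>d\<close> given by the series, and the branches of \<open>(i/2) ln\<close> are \<open>d + k\<pi>\<close>.\<close>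

section \<open>The golden ratio and the exponent \<open>\<nu>\<close>\<close>

lemma golden_gt_1: "golden > 1"
proof -
  have "sqrt 5 > 1" by (simp add: real_less_rsqrt)
  thus ?thesis by (simp add: golden_def)
qed

lemma golden_square: "golden ^ 2 = golden + 1"
  by (simp add: golden_def power2_eq_square field_simps)

lemma golden_pow_8: "golden ^ 8 + 1 = 7 * golden ^ 4"
  using golden_square by algebra

lemma golden_pow_plus_1_pos: "golden ^ n + 1 > 0"
  using golden_gt_1 by (simp add: add_pos_pos)

definition golden_nu :: real where "golden_nu = 2 * ln golden / pi"

lemma golden_nu_pos: "golden_nu > 0"
  using golden_gt_1 by (simp add: golden_nu_def)

lemma golden_nu_less_half: "golden_nu < 1/2"
proof -
  have "ln golden \<le> golden - 1" using golden_gt_1 by (intro ln_le_minus_one) simp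
  moreover have "sqrt 5 < 5/2" by (rule real_less_lsqrt) (simp_all add: power2_eq_square)
  hence "golden - 1 < 3/4" by (simp add: golden_def)
  ultimately show ?thesis using pi_gt3 by (simp add: golden_nu_def field_simps)
qed

lemma golden_nu_nonzero: "golden_nu \<noteq> 0"
  and golden_nu_abs_less_half: "\<bar>golden_nu\<bar> < 1/2"
  using golden_nu_pos golden_nu_less_half by auto

lemma exp_golden_nu: "exp (c * pi * golden_nu) = golden powr (2 * c)"
  using golden_gt_1 by (simp add: golden_nu_def powr_def mult_ac)

lemma exp_pi_golden_nu: "exp (pi * golden_nu) = golden ^ 2"
  using exp_golden_nu[of 1] golden_gt_1 by (simp add: powr_realpow)

lemma exp_2pi_golden_nu: "exp (2 * pi * golden_nu) = golden ^ 4"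
  using exp_golden_nu[of 2] golden_gt_1 by (simp add: powr_realpow)

lemma cosh_2pi_golden_nu: "cosh (2 * pi * golden_nu) = 7/2"
  using golden_gt_1 golden_pow_8
  unfolding cosh_def exp_minus exp_2pi_golden_nu by (simp add: field_simps)

lemma sinh_2pi_golden_nu: "sinh (2 * pi * golden_nu) = (golden ^ 4 - 1 / golden ^ 4) / 2"
  unfolding sinh_def exp_minus exp_2pi_golden_nu by (simp add: inverse_eq_divide)

lemma tanh_pi_golden_nu: "tanh (pi * golden_nu) = (golden ^ 4 - 1) / (golden ^ 4 + 1)"
proof -
  have exp: "exp (- 2 * (pi * golden_nu)) = 1 / golden ^ 4"
    using exp_2pi_golden_nu by (simp add: exp_minus mult.assoc inverse_eq_divide)
  have frac: "(1 - 1 / a) / (1 + 1 / a) = (a - 1) / (a + 1)" if "a > 0" for a :: real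
    using that by (simp add: divide_simps)
  show ?thesis
    unfolding tanh_real_altdef exp by (rule frac) (use golden_gt_1 in simp)
qed

lemma PVI_nu_minus_2cosh:
  assumes "\<nu> > 0"
  shows "PVI_nu (- 2 * cosh (2 * pi * \<nu>)) = \<nu>"
  unfolding PVI_nu_def
proof (rule the_equality)
  fix \<mu> assume "\<mu> > 0 \<and> - 2 * cosh (2 * pi * \<nu>) = - 2 * cosh (2 * pi * \<mu>)"
  thus "\<mu> = \<nu>" using assms by auto
qed (use assms in simp)

lemma PVI_nu_minus_7: "PVI_nu (-7) = golden_nu"
  using PVI_nu_minus_2cosh[OF golden_nu_pos] by (simp add: cosh_2pi_golden_nu)

section \<open>Reducing the Gamma factors at \<open>\<mu> = -1\<close>\<close>

lemma not_nonpos_Ints_if_Im_nonzero: "Im z \<noteq> 0 \<Longrightarrow> z \<notin> \<int>\<^sub>\<le>\<^sub>0"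
  by (auto elim!: nonpos_Ints_cases')

lemma Gamma_plus1_Im_nonzero: "Im z \<noteq> 0 \<Longrightarrow> Gamma (z + 1) = z * Gamma z"
  by (intro Gamma_plus1 not_nonpos_Ints_if_Im_nonzero)

lemma Gamma_plus2_Im_nonzero:
  assumes "Im z \<noteq> 0"
  shows "Gamma (z + 2) = (z + 1) * z * Gamma z"
proof -
  have "Gamma ((z + 1) + 1) = (z + 1) * Gamma (z + 1)"
    using assms by (intro Gamma_plus1_Im_nonzero) simp
  thus ?thesis using Gamma_plus1_Im_nonzero[OF assms] by (simp add: add.assoc)
qed

lemma Gamma_minus1_Im_nonzero:
  assumes "Im z \<noteq> 0"
  shows "Gamma (z - 1) = Gamma z / (z - 1)"
proof -
  have "Gamma ((z - 1) + 1) = (z - 1) * Gamma (z - 1)"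
    using assms by (intro Gamma_plus1_Im_nonzero) simp
  moreover have "z - 1 \<noteq> 0" using assms by auto
  ultimately show ?thesis by (simp add: eq_divide_eq)
qed

lemma Gamma_half_minus_i_pow4:
  fixes y :: real
  assumes "y \<noteq> 0"
  shows "Gamma (1/2 - \<i> * y) ^ 4 =
           2 powr (8 * \<i> * y) * pi ^ 2 * Gamma (1 - 2 * \<i> * y) ^ 4 / Gamma (1 - \<i> * y) ^ 4"
proof -
  define z where "z = 1/2 - \<i> * y"
  have z: "z + 1/2 = 1 - \<i> * y" "2 * z = 1 - 2 * \<i> * y" "1 - 2 * z = 2 * \<i> * y"
    by (simp_all add: z_def algebra_simps)
  have "Gamma z * Gamma (z + 1/2) = exp ((1 - 2*z) * of_real (ln 2)) * sqrt pi * Gamma (2*z)"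
    by (rule Gamma_legendre_duplication) (use assms in \<open>auto simp: z_def intro!: not_nonpos_Ints_if_Im_nonzero\<close>)
  also have "exp ((1 - 2*z) * of_real (ln 2)) = 2 powr (2 * \<i> * y)"
    unfolding z by (simp add: powr_def Ln_of_real[of 2, simplified] mult_ac)
  finally have dup: "Gamma z * Gamma (1 - \<i> * y) = 2 powr (2 * \<i> * y) * sqrt pi * Gamma (1 - 2 * \<i> * y)"
    unfolding z .
  have "Gamma (1 - \<i> * y) \<noteq> 0"
    using assms by (auto simp: Gamma_eq_zero_iff intro!: not_nonpos_Ints_if_Im_nonzero)
  with dup have "Gamma z = 2 powr (2 * \<i> * y) * sqrt pi * Gamma (1 - 2 * \<i> * y) / Gamma (1 - \<i> * y)"
    by (simp add: eq_divide_eq)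
  hence "Gamma z ^ 4 = (2 powr (2 * \<i> * y)) ^ 4 * sqrt pi ^ 4 * Gamma (1 - 2 * \<i> * y) ^ 4 / Gamma (1 - \<i> * y) ^ 4"
    by (simp add: power_mult_distrib power_divide)
  also have "(2 powr (2 * \<i> * y)) ^ 4 = (2 powr (8 * \<i> * y) :: complex)"
    by (simp add: powr_def mult_ac flip: exp_of_nat_mult)
  also have "sqrt pi ^ 4 = pi ^ 2"
    by (simp add: power4_eq_xxxx power2_eq_square)
  finally show ?thesis by (simp add: z_def)
qed

definition gamma_closed_form :: "real \<Rightarrow> real \<Rightarrow> complex" where
  "gamma_closed_form K \<nu> =
     complex_of_real K * 2 powr (16 * \<i> * complex_of_real \<nu>)
     * ((1 - 2 * \<i> * complex_of_real \<nu>) ^ 2 * complex_of_real (\<nu> ^ 2)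
        / (1 + 2 * \<i> * complex_of_real \<nu>) ^ 2)
     * (Gamma (1 - 2 * \<i> * complex_of_real \<nu>) ^ 4 / Gamma (1 - \<i> * complex_of_real \<nu>) ^ 8)"

lemma gamma_closed_form_mult: "gamma_closed_form K \<nu> * complex_of_real c = gamma_closed_form (K * c) \<nu>"
  by (simp add: gamma_closed_form_def mult_ac)

text \<open>\<open>\<Gamma>(5/2 - i\<nu>)\<close> and \<open>\<Gamma>(-1/2 - i\<nu>)\<close> reduce to \<open>\<Gamma>(1/2 - i\<nu>)\<close>, whose fourth power is given by
  Legendre duplication; the factor \<open>16\<^sup>2\<^sup>i\<^sup>\<nu>\<close> combines with \<open>2\<^sup>8\<^sup>i\<^sup>\<nu>\<close> from the duplication formula.\<close>

lemma PVI_d_arg_mu_minus_1: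
  fixes \<nu> :: real and p01 px1 :: complex
  assumes "\<nu> \<noteq> 0"
  shows "PVI_d_arg (-1) p01 px1 \<nu> = gamma_closed_form (pi ^ 2) \<nu>
     * ((1/2 * (exp (2 * pi * \<nu>) * px1 - p01) * sinh (2 * pi * \<nu>)
         + 2 * (complex_of_real (exp (2 * pi * \<nu>)) + 1)) / sinh (2 * pi * \<nu>) ^ 2)"
proof -
  define z where "z = 1/2 - \<i> * complex_of_real \<nu>"
  define E where "E = (2 powr (8 * \<i> * complex_of_real \<nu>) :: complex)"
  define g1 where "g1 = Gamma (1 - \<i> * complex_of_real \<nu>)"
  define g2 where "g2 = Gamma (1 - 2 * \<i> * complex_of_real \<nu>)"
  define s where "s = sinh (2 * pi * \<nu>)"
  define X where "X = 1/2 * (exp (2 * pi * \<nu>) * px1 - p01) * complex_of_real s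
                       + 2 * (complex_of_real (exp (2 * pi * \<nu>)) + 1)"
  define p where "p = 1 - 2 * \<i> * complex_of_real \<nu>"
  define q where "q = 1 + 2 * \<i> * complex_of_real \<nu>"
  have Im: "Im z \<noteq> 0" "Im (- \<i> * complex_of_real \<nu>) \<noteq> 0"
    using assms by (simp_all add: z_def)
  have G1: "Gamma (3/2 - (-1) - \<i> * complex_of_real \<nu>) = (z + 1) * z * Gamma z"
    using Gamma_plus2_Im_nonzero[OF Im(1)] by (simp add: z_def)
  have G2: "Gamma (-1 + 1/2 - \<i> * complex_of_real \<nu>) = Gamma z / (z - 1)"
    using Gamma_minus1_Im_nonzero[OF Im(1)] by (simp add: z_def)
  have "g1 = - \<i> * complex_of_real \<nu> * Gamma (- \<i> * complex_of_real \<nu>)"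
    using Gamma_plus1_Im_nonzero[OF Im(2)] by (simp add: g1_def)
  hence G3: "Gamma (- \<i> * complex_of_real \<nu>) = g1 / (- \<i> * complex_of_real \<nu>)"
    using assms by (auto simp: field_simps)
  have G4: "Gamma z ^ 4 = E * pi ^ 2 * g2 ^ 4 / g1 ^ 4"
    unfolding z_def E_def g1_def g2_def by (rule Gamma_half_minus_i_pow4[OF assms])
  have E1: "16 powr (2 * \<i> * complex_of_real \<nu>) = E" and E2: "2 powr (16 * \<i> * complex_of_real \<nu>) = E ^ 2"
    by (simp_all add: E_def powr_def Ln_of_real[of 2, simplified] Ln_of_real[of 16, simplified]
                      ln_realpow[of 2 4, simplified] mult_ac flip: exp_of_nat_mult)
  have cos: "cos (2 * complex_of_real pi * (-1)) = 1"
    by (simp flip: cos_of_real)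
  define D where "D = 2 * complex_of_real \<nu> + \<i> * (1 - 2 * (-1))"
  have D: "D \<noteq> 0"
    by (simp add: D_def complex_eq_iff)
  have "z + 1 = - \<i> / 2 * D"
    by (simp add: z_def D_def algebra_simps)
  hence zz: "(z + 1) / D = - \<i> / 2"
    using D by (metis nonzero_mult_div_cancel_right)
  have nz: "z - 1 \<noteq> 0" "q \<noteq> 0" "s \<noteq> 0"
    using assms by (simp_all add: z_def q_def s_def complex_eq_iff)
  have g1: "g1 \<noteq> 0"
    using assms by (auto simp: g1_def Gamma_eq_zero_iff intro!: not_nonpos_Ints_if_Im_nonzero)
  have "z * q = - p * (z - 1)"
    by (simp add: z_def p_def q_def algebra_simps)
  hence zz': "z / (z - 1) = - p / q"
    using nz by (simp add: field_simps)
  have "k * (a * w * G) ^ 2 * (G / b) ^ 2 = k * ((a / c) ^ 2 * (w / b) ^ 2 * G ^ 4 * c ^ 2)"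
    if "c \<noteq> 0" for k a w G b c :: complex
    using that by (simp add: power_mult_distrib power_divide power4_eq_xxxx power2_eq_square)
  from this[OF D, of "4 * E" "z + 1" z "Gamma z" "z - 1"]
  have split: "4 * E * ((z + 1) * z * Gamma z) ^ 2 * (Gamma z / (z - 1)) ^ 2
      = 4 * E * ((- \<i> / 2) ^ 2 * (- p / q) ^ 2 * (E * pi ^ 2 * g2 ^ 4 / g1 ^ 4) * D ^ 2)"
    unfolding zz zz' G4 .
  show ?thesis
    unfolding PVI_d_arg_def gamma_closed_form_def G1 G2 G3 E1 E2 cos one_add_one
    apply (fold g1_def g2_def s_def D_def X_def p_def q_def)
    unfolding split using D nz g1 assms
    by (simp add: field_simps power2_eq_square power4_eq_xxxx) (simp add: eval_nat_numeral)
qed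

section \<open>A series of odd zeta values\<close>

lemma inverse_squares_summable: "summable (\<lambda>k. 1 / real (Suc k) ^ 2)"
  using inverse_squares_sums by (simp add: sums_iff add.commute)

lemma square_le_powr:
  fixes x s :: real
  assumes "x \<ge> 1" "s \<ge> 2"
  shows "x ^ 2 \<le> x powr s"
proof -
  have "x ^ 2 = x powr 2" using assms by (simp add: powr_realpow)
  also have "\<dots> \<le> x powr s" using assms by (intro powr_mono) auto
  finally show ?thesis .
qed

lemma rzeta_summable:
  assumes "s \<ge> 2"
  shows "summable (\<lambda>k. 1 / real (Suc k) powr s)"
proof (rule summable_comparison_test)
  show "summable (\<lambda>k. 1 / real (Suc k) ^ 2)"
    by (rule inverse_squares_summable)
  show "\<exists>N. \<forall>k\<ge>N. norm (1 / real (Suc k) powr s) \<le> 1 / real (Suc k) ^ 2"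
    using assms by (auto intro!: frac_le square_le_powr)
qed

lemma rzeta_sums_nat:
  assumes "m \<ge> 2"
  shows "(\<lambda>k. 1 / real (Suc k) ^ m) sums rzeta m"
  using summable_sums[OF rzeta_summable[of m]] assms
  by (simp add: rzeta_def powr_realpow)

lemma rzeta_nonneg: "s \<ge> 2 \<Longrightarrow> rzeta s \<ge> 0"
  unfolding rzeta_def by (intro suminf_nonneg rzeta_summable) auto

lemma rzeta_le_pi_sq_div_6:
  assumes "s \<ge> 2"
  shows "rzeta s \<le> pi ^ 2 / 6"
proof -
  have "rzeta s \<le> (\<Sum>k. 1 / real (Suc k) ^ 2)"
    unfolding rzeta_def
  proof (rule suminf_le[OF _ rzeta_summable[OF assms]])
    show "summable (\<lambda>k. 1 / real (Suc k) ^ 2)"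
      by (rule inverse_squares_summable)
    show "1 / real (Suc k) powr s \<le> 1 / real (Suc k) ^ 2" for k
      using assms by (auto intro!: frac_le square_le_powr)
  qed
  also have "\<dots> = pi ^ 2 / 6"
    using inverse_squares_sums by (simp add: sums_iff add.commute)
  finally show ?thesis .
qed

definition phase_coeff :: "nat \<Rightarrow> real \<Rightarrow> real" where
  "phase_coeff m x = (-1) ^ m * (1 - 4 ^ m) / real (2 * m + 1) * x ^ (2 * m + 1)"

lemma d_series_term_eq: "d_series_term \<nu> m = phase_coeff m \<nu> * rzeta (2 * m + 1)"
  by (simp add: d_series_term_def phase_coeff_def)

lemma phase_coeff_divide: "phase_coeff m (x / c) = phase_coeff m x / c ^ (2 * m + 1)"
  by (simp add: phase_coeff_def power_divide)

lemma abs_phase_coeff_le: "\<bar>phase_coeff m x\<bar> \<le> \<bar>x\<bar> * (4 * x ^ 2) ^ m"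
proof -
  have "\<bar>1 - 4 ^ m\<bar> \<le> (4::real) ^ m"
    using one_le_power[of "4::real" m] by simp
  hence "\<bar>phase_coeff m x\<bar> \<le> 4 ^ m / 1 * \<bar>x\<bar> ^ (2 * m + 1)"
    unfolding phase_coeff_def abs_mult abs_divide power_abs
    by (intro mult_right_mono divide_mono) auto
  also have "\<dots> = \<bar>x\<bar> * (4 * x ^ 2) ^ m"
    by (simp add: power_add power_mult power_mult_distrib)
  finally show ?thesis .
qed

lemma summable_mult_power_4_square:
  fixes y :: real
  assumes "\<bar>y\<bar> < 1/2"
  shows "summable (\<lambda>n. C * (4 * y ^ 2) ^ n)"
proof -
  have "\<bar>y\<bar> ^ 2 < (1/2) ^ 2"
    using assms by (intro power_strict_mono) auto
  hence "y ^ 2 < 1/4" by (simp add: power2_eq_square)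
  thus ?thesis by (intro summable_mult summable_geometric) (simp add: power2_eq_square)
qed

lemma summable_abs_d_series_term:
  fixes \<nu> :: real
  assumes "\<bar>\<nu>\<bar> < 1/2"
  shows "summable (\<lambda>n. \<bar>d_series_term \<nu> (Suc n)\<bar>)"
proof (rule summable_comparison_test)
  show "summable (\<lambda>n. pi ^ 2 / 6 * \<bar>\<nu>\<bar> * (4 * \<nu> ^ 2) ^ Suc n)"
    using summable_mult_power_4_square[OF assms] by (simp add: summable_Suc_iff)
  have "\<bar>d_series_term \<nu> (Suc n)\<bar> \<le> \<bar>\<nu>\<bar> * (4 * \<nu> ^ 2) ^ Suc n * (pi ^ 2 / 6)" for n
    unfolding d_series_term_eq abs_mult
    using rzeta_nonneg[of "2 * Suc n + 1"] rzeta_le_pi_sq_div_6[of "2 * Suc n + 1"]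
    by (intro mult_mono abs_phase_coeff_le) auto
  thus "\<exists>N. \<forall>n\<ge>N. norm \<bar>d_series_term \<nu> (Suc n)\<bar> \<le> pi ^ 2 / 6 * \<bar>\<nu>\<bar> * (4 * \<nu> ^ 2) ^ Suc n"
    by (simp add: mult_ac)
qed

text \<open>\<open>phase x\<close> is the argument of \<open>(1 - ix)\<^sup>8 / (1 - 2ix)\<^sup>4\<close>, see \<open>gamma_ratio_factor_polar\<close>.\<close>

definition phase :: "real \<Rightarrow> real" where
  "phase x = 4 * arctan (2 * x) - 8 * arctan x"

lemma phase_sums:
  assumes "\<bar>x\<bar> \<le> 1/2"
  shows "(\<lambda>n. -8 * phase_coeff (Suc n) x) sums phase x"
proof -
  let ?a = "\<lambda>t k. (-1) ^ k * (1 / real (k * 2 + 1) * t ^ (k * 2 + 1))"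
  have arctan: "?a t sums arctan t" if "\<bar>t\<bar> \<le> 1" for t
    using summable_arctan_series[OF that] arctan_series[OF that] by (simp add: sums_iff)
  have "(\<lambda>k. 4 * ?a (2 * x) k - 8 * ?a x k) sums phase x"
    unfolding phase_def using assms by (intro sums_diff sums_mult arctan) auto
  moreover have "4 * ?a (2 * x) k - 8 * ?a x k = -8 * phase_coeff k x" for k
  proof -
    have "(2::real) ^ (k * 2) = 4 ^ k" by (induction k) auto
    hence pow: "(2 * x) ^ (k * 2 + 1) = 2 * 4 ^ k * x ^ (k * 2 + 1)"
      by (simp add: power_mult_distrib)
    have "4 * (s * (1 / d * (2 * q * y))) - 8 * (s * (1 / d * y)) = -8 * (s * (1 - q) / d * y)"
      for s d q y :: real
      by (simp add: algebra_simps add_divide_distrib diff_divide_distrib)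
    thus ?thesis
      unfolding phase_coeff_def pow mult.commute[of 2 k] .
  qed
  ultimately have "(\<lambda>k. -8 * phase_coeff k x) sums phase x" by simp
  moreover have "phase_coeff 0 x = 0" by (simp add: phase_coeff_def)
  ultimately show ?thesis by (subst sums_Suc_iff) simp
qed

text \<open>Entry \<open>(n, k)\<close> is the \<open>n\<close>-th Taylor term of \<open>phase (y / (k + 1))\<close>: its columns sum to
  values of \<open>phase\<close>, its rows to the terms of the zeta series.\<close>

definition phase_zeta_array :: "real \<Rightarrow> nat \<times> nat \<Rightarrow> real" where
  "phase_zeta_array y = (\<lambda>(n, k). -8 * phase_coeff (Suc n) y / real (Suc k) ^ (2 * Suc n + 1))"

lemma phase_zeta_array_row_sums:
  "(\<lambda>k. phase_zeta_array y (n, k)) sums (-8 * d_series_term y (Suc n))"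
  "(\<lambda>k. norm (phase_zeta_array y (n, k))) sums (8 * \<bar>phase_coeff (Suc n) y\<bar> * rzeta (2 * Suc n + 1))"
proof -
  have zeta: "(\<lambda>k. 1 / real (Suc k) ^ (2 * Suc n + 1)) sums rzeta (2 * Suc n + 1)"
    by (rule rzeta_sums_nat) simp
  show "(\<lambda>k. phase_zeta_array y (n, k)) sums (-8 * d_series_term y (Suc n))"
    using sums_mult[OF zeta, of "-8 * phase_coeff (Suc n) y"]
    by (simp add: phase_zeta_array_def d_series_term_eq mult.assoc)
  show "(\<lambda>k. norm (phase_zeta_array y (n, k))) sums (8 * \<bar>phase_coeff (Suc n) y\<bar> * rzeta (2 * Suc n + 1))"
    using sums_mult[OF zeta, of "8 * \<bar>phase_coeff (Suc n) y\<bar>"]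
    by (simp add: phase_zeta_array_def abs_mult)
qed

lemma norm_phase_zeta_array_le: "norm (phase_zeta_array y (n, k)) \<le> 8 * \<bar>y\<bar> * (4 * y ^ 2) ^ Suc n"
proof -
  have "norm (phase_zeta_array y (n, k)) = 8 * \<bar>phase_coeff (Suc n) y\<bar> / real (Suc k) ^ (2 * Suc n + 1)"
    by (simp add: phase_zeta_array_def abs_mult)
  also have "\<dots> \<le> 8 * \<bar>phase_coeff (Suc n) y\<bar> / 1"
    by (intro divide_left_mono one_le_power) auto
  also have "\<dots> \<le> 8 * \<bar>y\<bar> * (4 * y ^ 2) ^ Suc n"
    using abs_phase_coeff_le[of "Suc n" y] by simp
  finally show ?thesis .
qed

lemma phase_zeta_array_column_has_sum:
  assumes "\<bar>y\<bar> < 1/2"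
  shows "((\<lambda>n. phase_zeta_array y (n, k)) has_sum phase (y / real (Suc k))) UNIV"
proof (rule norm_summable_imp_has_sum)
  show "summable (\<lambda>n. norm (phase_zeta_array y (n, k)))"
  proof (rule summable_comparison_test)
    show "summable (\<lambda>n. 8 * \<bar>y\<bar> * (4 * y ^ 2) ^ Suc n)"
      using summable_mult_power_4_square[OF assms] by (simp add: summable_Suc_iff)
  qed (use norm_phase_zeta_array_le in simp)
  have "\<bar>y / real (Suc k)\<bar> \<le> \<bar>y\<bar>"
    by (simp add: divide_le_eq mult_le_cancel_left1)
  hence "(\<lambda>n. -8 * phase_coeff (Suc n) (y / real (Suc k))) sums phase (y / real (Suc k))"
    using assms by (intro phase_sums) simp
  thus "(\<lambda>n. phase_zeta_array y (n, k)) sums phase (y / real (Suc k))"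
    by (simp add: phase_zeta_array_def phase_coeff_divide)
qed

lemma phase_zeta_array_abs_summable:
  assumes "\<bar>y\<bar> < 1/2"
  shows "(\<lambda>p. norm (phase_zeta_array y p)) summable_on UNIV \<times> UNIV"
proof -
  define r where "r n = 8 * \<bar>phase_coeff (Suc n) y\<bar> * rzeta (2 * Suc n + 1)" for n
  have r_nonneg: "r n \<ge> 0" for n
    unfolding r_def using rzeta_nonneg[of "2 * Suc n + 1"] by simp
  have "summable r"
  proof (rule summable_comparison_test)
    show "summable (\<lambda>n. 8 * pi ^ 2 / 6 * \<bar>y\<bar> * (4 * y ^ 2) ^ Suc n)"
      using summable_mult_power_4_square[OF assms] by (simp add: summable_Suc_iff)
    have "r n \<le> 8 * (\<bar>y\<bar> * (4 * y ^ 2) ^ Suc n) * (pi ^ 2 / 6)" for n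
      unfolding r_def using rzeta_nonneg[of "2 * Suc n + 1"] rzeta_le_pi_sq_div_6[of "2 * Suc n + 1"]
      by (intro mult_mono mult_left_mono abs_phase_coeff_le) auto
    thus "\<exists>N. \<forall>n\<ge>N. norm (r n) \<le> 8 * pi ^ 2 / 6 * \<bar>y\<bar> * (4 * y ^ 2) ^ Suc n"
      using r_nonneg by (simp add: mult_ac)
  qed
  show ?thesis
  proof (rule summable_on_SigmaI[where g = r])
    show "((\<lambda>k. norm (phase_zeta_array y (n, k))) has_sum r n) UNIV" for n
      unfolding r_def by (rule sums_nonneg_imp_has_sum[OF phase_zeta_array_row_sums(2)]) simp
    show "r summable_on UNIV"
      using \<open>summable r\<close> r_nonneg by (simp add: summable_on_UNIV_nonneg_real_iff)
  qed auto
qed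

lemma phase_sum_zeta_series:
  fixes y :: real
  assumes y: "\<bar>y\<bar> < 1/2"
  shows "(\<lambda>k. phase (y / real (Suc k))) sums (-8 * (\<Sum>n. d_series_term y (Suc n)))"
proof -
  define F where "F = phase_zeta_array y"
  obtain T where T: "(F has_sum T) (UNIV \<times> UNIV)"
    using abs_summable_summable[OF phase_zeta_array_abs_summable[OF y]]
    unfolding F_def summable_on_def by blast
  have "((\<lambda>n. -8 * d_series_term y (Suc n)) has_sum T) UNIV"
  proof (rule has_sum_Sigma'[OF T])
    show "((\<lambda>k. F (n, k)) has_sum -8 * d_series_term y (Suc n)) UNIV" for n
      using phase_zeta_array_row_sums[of y n] unfolding F_def
      by (intro norm_summable_imp_has_sum) (auto simp: sums_iff)
  qed
  moreover have "((\<lambda>k. phase (y / real (Suc k))) has_sum T) UNIV"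
  proof (rule has_sum_Sigma'[OF T[unfolded has_sum_swap[of F]]])
    show "((\<lambda>n. (\<lambda>(k, n). F (n, k)) (k, n)) has_sum phase (y / real (Suc k))) UNIV" for k
      unfolding case_prod_conv F_def by (rule phase_zeta_array_column_has_sum[OF y])
  qed
  moreover have "summable (\<lambda>n. d_series_term y (Suc n))"
    using summable_abs_d_series_term[OF y] by (rule summable_rabs_cancel)
  ultimately show ?thesis
    by (metis has_sum_imp_sums sums_mult sums_unique2 summable_sums)
qed

section \<open>Modulus and argument of \<open>\<Gamma>(1 - 2iy)\<^sup>4 / \<Gamma>(1 - iy)\<^sup>8\<close>\<close>

lemma norm_Gamma_one_minus_i_squared:
  fixes y :: real
  assumes "y \<noteq> 0"
  shows "cmod (Gamma (1 - \<i> * y)) ^ 2 = pi * y / sinh (pi * y)"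
proof -
  define g where "g = Gamma (1 - \<i> * y)"
  have nz: "\<i> * complex_of_real y \<notin> \<int>\<^sub>\<le>\<^sub>0"
    using assms by (intro not_nonpos_Ints_if_Im_nonzero) simp
  have "cnj g = Gamma (1 + \<i> * y)"
    by (simp add: g_def cnj_Gamma)
  also have "\<dots> = \<i> * y * Gamma (\<i> * y)"
    using Gamma_plus1[OF nz] by (simp add: add.commute)
  finally have cnj: "cnj g = \<i> * y * Gamma (\<i> * y)" .
  have "sin (pi * (\<i> * y)) = sin (\<i> * complex_of_real (pi * y))"
    by (simp add: mult_ac)
  also have "\<dots> = \<i> * ((exp (complex_of_real (pi * y)) - inverse (exp (complex_of_real (pi * y)))) / 2)"
    by (rule sin_i_times)
  also have "\<dots> = \<i> * sinh (pi * y)"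
    by (simp only: exp_of_real) (simp add: sinh_def exp_minus)
  finally have reflection: "Gamma (\<i> * y) * g = pi / (\<i> * sinh (pi * y))"
    using Gamma_reflection_complex[of "\<i> * y"] by (simp add: g_def)
  have "complex_of_real (cmod g ^ 2) = g * cnj g"
    by (rule complex_norm_square)
  also have "\<dots> = \<i> * y * (Gamma (\<i> * y) * g)"
    by (simp add: cnj mult_ac)
  also have "\<dots> = pi * y / sinh (pi * y)"
    unfolding reflection using assms by (simp add: field_simps)
  finally show ?thesis
    unfolding g_def by (simp only: of_real_eq_iff)
qed

lemma norm_Gamma_ratio:
  fixes y :: real
  assumes "y \<noteq> 0"
  shows "cmod (Gamma (1 - 2 * \<i> * y) ^ 4 / Gamma (1 - \<i> * y) ^ 8) = (tanh (pi * y) / (pi * y)) ^ 2"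
proof -
  have "cmod (Gamma (1 - 2 * \<i> * y) ^ 4 / Gamma (1 - \<i> * y) ^ 8)
      = (cmod (Gamma (1 - \<i> * complex_of_real (2 * y))) ^ 2) ^ 2 / (cmod (Gamma (1 - \<i> * y)) ^ 2) ^ 4"
    by (simp add: norm_divide norm_power ac_simps flip: power_mult)
  also have "\<dots> = (pi * (2 * y) / sinh (pi * (2 * y))) ^ 2 / (pi * y / sinh (pi * y)) ^ 4"
    using assms norm_Gamma_one_minus_i_squared[OF assms] norm_Gamma_one_minus_i_squared[of "2 * y"]
    by (simp del: of_real_mult)
  also have "sinh (pi * (2 * y)) = 2 * sinh (pi * y) * cosh (pi * y)"
    using sinh_double[of "pi * y"] by (simp add: mult_ac)
  also have "(pi * (2 * y) / (2 * sinh (pi * y) * cosh (pi * y))) ^ 2 / (pi * y / sinh (pi * y)) ^ 4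
      = (tanh (pi * y) / (pi * y)) ^ 2"
    using assms by (simp add: tanh_def field_simps)
  finally show ?thesis .
qed

definition gamma_ratio_factor :: "real \<Rightarrow> nat \<Rightarrow> complex" where
  "gamma_ratio_factor y k = (1 - \<i> * (y / k)) ^ 8 / (1 - \<i> * (2 * y / k)) ^ 4"

lemma exp_pow4_eq_exp_pow8: "4 * a = 8 * b \<Longrightarrow> exp a ^ 4 = exp (b :: complex) ^ 8"
  by (simp flip: exp_of_nat_mult)

lemma divide_pow4_divide_pow8: "(a / b) ^ 4 / (c / d) ^ 8 = (a ^ 4 / c ^ 8) * (d ^ 8 / b ^ 4)"
  for a b c d :: complex
  by (simp add: divide_inverse inverse_mult_distrib power_mult_distrib power_inverse mult_ac)

lemma mult_pow4_mult_pow8: "(a * b) ^ 4 / (c * d) ^ 8 = (a ^ 4 / c ^ 8) * (b ^ 4 / d ^ 8)"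
  for a b c d :: complex
  by (simp add: divide_inverse inverse_mult_distrib power_mult_distrib mult_ac)

lemma Gamma_series_Weierstrass_ratio:
  fixes y :: real
  assumes "y \<noteq> 0"
  shows "Gamma_series_Weierstrass (- 2 * \<i> * y) n ^ 4 / Gamma_series_Weierstrass (- \<i> * y) n ^ 8
       = y ^ 4 / 16 * (\<Prod>k=1..n. gamma_ratio_factor y k)"
proof -
  define z1 where "z1 = - \<i> * complex_of_real y"
  define z2 where "z2 = - 2 * \<i> * complex_of_real y"
  define e where "e z k = exp (z / of_nat k) / (1 + z / of_nat k)" for z :: complex and k :: nat
  have factor: "e z2 k ^ 4 / e z1 k ^ 8 = gamma_ratio_factor y k" for k
  proof -
    have "exp (z2 / of_nat k) ^ 4 = exp (z1 / of_nat k) ^ 8"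
      by (rule exp_pow4_eq_exp_pow8) (simp add: z1_def z2_def)
    moreover have "1 + z1 / of_nat k = 1 - \<i> * (y / k)" "1 + z2 / of_nat k = 1 - \<i> * (2 * y / k)"
      by (simp_all add: z1_def z2_def)
    ultimately show ?thesis
      unfolding e_def divide_pow4_divide_pow8 gamma_ratio_factor_def by simp
  qed
  have "(exp (- euler_mascheroni * z2) / z2) ^ 4 / (exp (- euler_mascheroni * z1) / z1) ^ 8
      = z1 ^ 8 / z2 ^ 4"
  proof -
    have "exp (- euler_mascheroni * z2) ^ 4 = exp (- euler_mascheroni * z1) ^ 8"
      by (rule exp_pow4_eq_exp_pow8) (simp add: z1_def z2_def)
    thus ?thesis unfolding divide_pow4_divide_pow8 by simp
  qed
  also have "\<dots> = y ^ 4 / 16"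
    using assms by (simp add: z1_def z2_def power_mult_distrib field_simps flip: power_add)
  finally have prefactor: "(exp (- euler_mascheroni * z2) / z2) ^ 4 / (exp (- euler_mascheroni * z1) / z1) ^ 8
      = y ^ 4 / 16" .
  have "Gamma_series_Weierstrass z2 n ^ 4 / Gamma_series_Weierstrass z1 n ^ 8
     = ((exp (- euler_mascheroni * z2) / z2) ^ 4 / (exp (- euler_mascheroni * z1) / z1) ^ 8)
       * (\<Prod>k=1..n. e z2 k ^ 4 / e z1 k ^ 8)"
    unfolding Gamma_series_Weierstrass_def e_def[symmetric] mult_pow4_mult_pow8
    by (simp only: prod_power_distrib prod_dividef)
  also have "\<dots> = y ^ 4 / 16 * (\<Prod>k=1..n. gamma_ratio_factor y k)"
    unfolding prefactor factor ..
  finally show ?thesis by (simp only: z1_def z2_def)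
qed

lemma gamma_ratio_factor_prod_LIMSEQ:
  fixes y :: real
  assumes y: "y \<noteq> 0"
  shows "(\<lambda>n. \<Prod>k<n. gamma_ratio_factor y (Suc k))
           \<longlonglongrightarrow> Gamma (1 - 2 * \<i> * y) ^ 4 / Gamma (1 - \<i> * y) ^ 8"
proof -
  define z1 where "z1 = - \<i> * complex_of_real y"
  define z2 where "z2 = - 2 * \<i> * complex_of_real y"
  have z: "z1 \<notin> \<int>\<^sub>\<le>\<^sub>0" "z2 \<notin> \<int>\<^sub>\<le>\<^sub>0"
    using y by (auto simp: z1_def z2_def intro!: not_nonpos_Ints_if_Im_nonzero)
  have "(\<lambda>n. 16 / y ^ 4 * (Gamma_series_Weierstrass z2 n ^ 4 / Gamma_series_Weierstrass z1 n ^ 8))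
          \<longlonglongrightarrow> 16 / y ^ 4 * (Gamma z2 ^ 4 / Gamma z1 ^ 8)"
    using z by (intro tendsto_intros Gamma_Weierstrass_complex) (simp add: Gamma_eq_zero_iff)
  moreover have "16 / y ^ 4 * (Gamma_series_Weierstrass z2 n ^ 4 / Gamma_series_Weierstrass z1 n ^ 8)
      = (\<Prod>k<n. gamma_ratio_factor y (Suc k))" for n
    using y unfolding z1_def z2_def Gamma_series_Weierstrass_ratio[OF y]
    by (simp add: prod.atLeast1_atMost_eq)
  moreover have "16 / y ^ 4 * (Gamma z2 ^ 4 / Gamma z1 ^ 8)
      = Gamma (1 - 2 * \<i> * y) ^ 4 / Gamma (1 - \<i> * y) ^ 8"
  proof -
    have "Gamma (1 - 2 * \<i> * y) = z2 * Gamma z2" "Gamma (1 - \<i> * y) = z1 * Gamma z1"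
      using Gamma_plus1[OF z(2)] Gamma_plus1[OF z(1)] by (simp_all add: z1_def z2_def add.commute)
    moreover have "z2 ^ 4 = 16 * y ^ 4" "z1 ^ 8 = y ^ 8"
      by (simp_all add: z1_def z2_def power_mult_distrib)
    ultimately show ?thesis
      using y z by (simp add: power_mult_distrib field_simps Gamma_eq_zero_iff flip: power_add)
  qed
  ultimately show ?thesis by simp
qed

lemma one_minus_i_polar: "1 - \<i> * x = sqrt (1 + x ^ 2) * cis (- arctan x)"
proof -
  have "sqrt (1 + x ^ 2) > 0" by (simp add: add_pos_nonneg)
  thus ?thesis by (simp add: complex_eq_iff cos_arctan sin_arctan)
qed

lemma one_minus_i_pow_polar:
  "(1 - \<i> * x) ^ (2 * n) = complex_of_real ((1 + x ^ 2) ^ n) * cis (- (2 * real n) * arctan x)"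
proof -
  have "(1 - \<i> * x) ^ (2 * n) = complex_of_real (sqrt (1 + x ^ 2) ^ (2 * n)) * cis (- arctan x) ^ (2 * n)"
    by (simp only: one_minus_i_polar power_mult_distrib of_real_power)
  also have "sqrt (1 + x ^ 2) ^ (2 * n) = (1 + x ^ 2) ^ n"
    by (simp add: power_mult)
  also have "cis (- arctan x) ^ (2 * n) = cis (- (2 * real n) * arctan x)"
    by (subst Complex.DeMoivre) simp
  finally show ?thesis .
qed

lemma gamma_ratio_factor_polar:
  "gamma_ratio_factor y k =
     complex_of_real ((1 + (y / k) ^ 2) ^ 4 / (1 + (2 * y / k) ^ 2) ^ 2) * cis (phase (y / k))"
proof -
  have "gamma_ratio_factor y k
      = complex_of_real ((1 + (y / k) ^ 2) ^ 4) * cis (- 8 * arctan (y / k))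
        / (complex_of_real ((1 + (2 * y / k) ^ 2) ^ 2) * cis (- 4 * arctan (2 * y / k)))"
    using one_minus_i_pow_polar[of "y / k" 4] one_minus_i_pow_polar[of "2 * y / k" 2]
    by (simp add: gamma_ratio_factor_def)
  thus ?thesis
    by (simp add: phase_def cis_divide cis_mult divide_inverse inverse_mult_distrib mult_ac)
qed

lemma prod_of_real_cis:
  fixes n :: nat
  shows "(\<Prod>k<n. complex_of_real (r k) * cis (\<theta> k)) = complex_of_real (\<Prod>k<n. r k) * cis (\<Sum>k<n. \<theta> k)"
  by (induction n) (simp_all add: cis_mult[symmetric] mult_ac)

text \<open>The \<open>n\<close>-th partial Weierstrass product has argument \<open>\<Sum>\<^sub>k\<^sub><\<^sub>n phase (y / (k + 1))\<close>, which tends to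
  \<open>-8 \<Sum> d_series_term\<close>; undoing these rotations leaves nonnegative reals, so the limit has exactly
  that argument.\<close>

lemma Gamma_ratio_polar:
  fixes y :: real
  assumes "y \<noteq> 0" and "\<bar>y\<bar> < 1/2"
  defines "B \<equiv> Gamma (1 - 2 * \<i> * y) ^ 4 / Gamma (1 - \<i> * y) ^ 8"
  shows "B = cmod B * cis (-8 * (\<Sum>n. d_series_term y (Suc n)))"
proof -
  define \<theta> where "\<theta> = -8 * (\<Sum>n. d_series_term y (Suc n))"
  define r where "r k = (1 + (y / k) ^ 2) ^ 4 / (1 + (2 * y / k) ^ 2) ^ 2" for k :: nat
  define R where "R n = (\<Prod>k<n. r (Suc k))" for n
  define S where "S n = (\<Sum>k<n. phase (y / real (Suc k)))" for n
  have "(\<Prod>k<n. gamma_ratio_factor y (Suc k)) = R n * cis (S n)" for n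
    unfolding R_def S_def gamma_ratio_factor_polar r_def[symmetric] by (rule prod_of_real_cis)
  hence "(\<lambda>n. R n * cis (S n)) \<longlonglongrightarrow> B"
    using gamma_ratio_factor_prod_LIMSEQ[OF assms(1)] by (simp add: B_def)
  moreover have "S \<longlonglongrightarrow> \<theta>"
    using phase_sum_zeta_series[OF assms(2)] unfolding sums_def S_def \<theta>_def .
  ultimately have "(\<lambda>n. R n * cis (S n) * cis (- S n)) \<longlonglongrightarrow> B * cis (- \<theta>)"
    by (intro tendsto_intros)
  hence lim: "(\<lambda>n. complex_of_real (R n)) \<longlonglongrightarrow> B * cis (- \<theta>)"
    by (simp add: mult.assoc cis_mult)
  have "Im (B * cis (- \<theta>)) = 0"
    using tendsto_Im[OF lim] by (simp add: LIMSEQ_const_iff)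
  moreover have "Re (B * cis (- \<theta>)) \<ge> 0"
  proof (rule LIMSEQ_le_const[OF tendsto_Re[OF lim]])
    have "R n \<ge> 0" for n by (simp add: R_def r_def prod_nonneg)
    thus "\<exists>N. \<forall>n\<ge>N. 0 \<le> Re (complex_of_real (R n))" by simp
  qed
  ultimately have "B * cis (- \<theta>) = cmod (B * cis (- \<theta>))"
    by (simp add: complex_eq_iff cmod_eq_Re)
  hence "B * cis (- \<theta>) * cis \<theta> = cmod B * cis \<theta>"
    by (simp add: norm_mult)
  thus ?thesis by (simp add: mult.assoc cis_mult \<theta>_def)
qed

lemma one_minus_i_over_one_plus_i_squared:
  "(1 - \<i> * x) ^ 2 / (1 + \<i> * x) ^ 2 = cis (- 4 * arctan x)"
proof -
  have "complex_of_real (1 + x ^ 2) \<noteq> 0"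
    by (simp only: of_real_eq_0_iff) (simp add: add_nonneg_eq_0_iff)
  thus ?thesis
    using one_minus_i_pow_polar[of x 1] one_minus_i_pow_polar[of "- x" 1]
    by (simp add: arctan_minus cis_divide)
qed

lemma gamma_closed_form_polar:
  fixes \<nu> K :: real
  assumes "\<nu> \<noteq> 0" and "\<bar>\<nu>\<bar> < 1/2"
  shows "gamma_closed_form K \<nu> = complex_of_real (K * (tanh (pi * \<nu>) / pi) ^ 2)
           * cis (16 * \<nu> * ln 2 - 4 * arctan (2 * \<nu>) - 8 * (\<Sum>n. d_series_term \<nu> (Suc n)))"
proof -
  have pow: "2 powr (16 * \<i> * complex_of_real \<nu>) = cis (16 * \<nu> * ln 2)"
    by (simp add: powr_def cis_conv_exp Ln_of_real[of 2, simplified] mult_ac)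
  have "(1 - 2 * \<i> * complex_of_real \<nu>) ^ 2 * \<nu> ^ 2 / (1 + 2 * \<i> * \<nu>) ^ 2
      = \<nu> ^ 2 * ((1 - \<i> * complex_of_real (2 * \<nu>)) ^ 2 / (1 + \<i> * complex_of_real (2 * \<nu>)) ^ 2)"
    by (simp add: divide_inverse mult_ac)
  also have "\<dots> = \<nu> ^ 2 * cis (- 4 * arctan (2 * \<nu>))"
    by (simp only: one_minus_i_over_one_plus_i_squared)
  finally have quotient: "(1 - 2 * \<i> * complex_of_real \<nu>) ^ 2 * \<nu> ^ 2 / (1 + 2 * \<i> * \<nu>) ^ 2
      = \<nu> ^ 2 * cis (- 4 * arctan (2 * \<nu>))" .
  have ratio: "Gamma (1 - 2 * \<i> * \<nu>) ^ 4 / Gamma (1 - \<i> * \<nu>) ^ 8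
      = (tanh (pi * \<nu>) / (pi * \<nu>)) ^ 2 * cis (-8 * (\<Sum>n. d_series_term \<nu> (Suc n)))"
    using Gamma_ratio_polar[OF assms] norm_Gamma_ratio[OF assms(1)] by simp
  show ?thesis
    unfolding gamma_closed_form_def pow quotient ratio using assms
    by (simp add: field_simps) (simp add: cis_mult algebra_simps)
qed

section \<open>The branches of \<open>d\<close> at the golden ratio\<close>

lemma half_i_log_values_exp:
  "half_i_log_values (exp (-2 * \<i> * D)) = {D + of_int k * complex_of_real pi | k :: int. True}"
proof -
  have "exp (Ln (exp (-2 * \<i> * D))) = exp (-2 * \<i> * D)" by simp
  then obtain n :: int where n: "Ln (exp (-2 * \<i> * D)) = -2 * \<i> * D + of_int (2 * n) * pi * \<i>"
    unfolding exp_eq by blast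
  have half_i_Ln: "\<i> / 2 * (Ln (exp (-2 * \<i> * D)) + 2 * complex_of_real pi * \<i> * of_int k)
      = D + of_int (- (n + k)) * complex_of_real pi" for k :: int
    unfolding n by (simp add: algebra_simps)
  show ?thesis
  proof (intro equalityI subsetI)
    fix x assume "x \<in> half_i_log_values (exp (-2 * \<i> * D))"
    then obtain k :: int where "x = \<i> / 2 * (Ln (exp (-2 * \<i> * D)) + 2 * complex_of_real pi * \<i> * of_int k)"
      unfolding half_i_log_values_def by blast
    thus "x \<in> {D + of_int k * complex_of_real pi | k :: int. True}" unfolding half_i_Ln by blast
  next
    fix x assume "x \<in> {D + of_int k * complex_of_real pi | k :: int. True}"
    then obtain k :: int where "x = D + of_int k * complex_of_real pi" by blast
    hence "x = \<i> / 2 * (Ln (exp (-2 * \<i> * D)) + 2 * complex_of_real pi * \<i> * of_int (- k - n))"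
      unfolding half_i_Ln by simp
    thus "x \<in> half_i_log_values (exp (-2 * \<i> * D))"
      unfolding half_i_log_values_def by blast
  qed
qed

definition d_series_value :: "real \<Rightarrow> complex" where
  "d_series_value \<nu> =
     of_real (pi / 2 - 8 * \<nu> * ln 2 + 2 * arccos (1 / sqrt (1 + 4 * \<nu> ^ 2))
              + 4 * (\<Sum>n. d_series_term \<nu> (Suc n)))
     + \<i> * of_real (pi / 2 * \<nu>)"

lemma arccos_eq_arctan: "x \<ge> 0 \<Longrightarrow> arccos (1 / sqrt (1 + x ^ 2)) = arctan x"
proof -
  assume "x \<ge> 0"
  hence "0 \<le> arctan x" "arctan x \<le> pi"
    using arctan_ubound[of x] zero_le_arctan_iff[of x] by linarith+
  thus ?thesis by (metis arccos_cos cos_arctan)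
qed

lemma PVI_bracket_golden:
  "(1/2 * (exp (2 * pi * golden_nu) * (-7) - (-7)) * sinh (2 * pi * golden_nu)
      + 2 * (exp (2 * pi * golden_nu) + 1)) / sinh (2 * pi * golden_nu) ^ 2
   = - ((golden ^ 4 + 1) ^ 2 / (golden ^ 2 + 1) ^ 2)"
proof -
  define s where "s = sinh (2 * pi * golden_nu)"
  define X where "X = 1/2 * (golden ^ 4 * (-7) - (-7)) * s + 2 * (golden ^ 4 + 1)"
  have "s * (2 * golden ^ 4) = golden ^ 8 - 1"
    unfolding s_def sinh_2pi_golden_nu using golden_gt_1 by (simp add: field_simps flip: power_add)
  hence "X * (golden ^ 2 + 1) ^ 2 = - ((golden ^ 4 + 1) ^ 2 * s ^ 2)"
    unfolding X_def using golden_square by algebra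
  moreover have "s \<noteq> 0" "(golden ^ 2 + 1) ^ 2 \<noteq> 0"
    using golden_nu_pos golden_pow_plus_1_pos[of 2] by (simp_all add: s_def)
  ultimately have "X / s ^ 2 = - ((golden ^ 4 + 1) ^ 2 / (golden ^ 2 + 1) ^ 2)"
    by (simp add: field_simps)
  thus ?thesis
    unfolding exp_2pi_golden_nu s_def[symmetric] X_def .
qed

lemma golden_closed_form_modulus:
  "pi ^ 2 * (golden ^ 4 + 1) ^ 2 / (golden ^ 2 + 1) ^ 2 * (tanh (pi * golden_nu) / pi) ^ 2
   = exp (pi * golden_nu)"
proof -
  have "pi ^ 2 * (golden ^ 4 + 1) ^ 2 / (golden ^ 2 + 1) ^ 2 * (tanh (pi * golden_nu) / pi) ^ 2
      = (golden ^ 4 - 1) ^ 2 / (golden ^ 2 + 1) ^ 2"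
    unfolding tanh_pi_golden_nu using golden_pow_plus_1_pos[of 4] by (simp add: power_divide power_mult_distrib)
  also have "(golden ^ 4 - 1) ^ 2 = (golden ^ 2 + 1) ^ 2 * golden ^ 2"
    using golden_square by algebra
  finally show ?thesis
    unfolding exp_pi_golden_nu using golden_pow_plus_1_pos[of 2] by simp
qed

lemma PVI_d_arg_golden:
  "PVI_d_arg (-1) (-7) (-7) golden_nu
     = gamma_closed_form (- (pi ^ 2 * (golden ^ 4 + 1) ^ 2 / (golden ^ 2 + 1) ^ 2)) golden_nu"
proof -
  let ?e = "exp (2 * pi * golden_nu)" and ?s = "sinh (2 * pi * golden_nu)"
  have "(1/2 * (complex_of_real ?e * -7 - -7) * complex_of_real ?s + 2 * (complex_of_real ?e + 1))
          / complex_of_real (?s ^ 2)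
      = complex_of_real ((1/2 * (?e * (-7) - (-7)) * ?s + 2 * (?e + 1)) / ?s ^ 2)"
    by (simp only: of_real_add of_real_mult of_real_divide of_real_diff of_real_minus
                   of_real_numeral of_real_1)
  also have "\<dots> = of_real (- ((golden ^ 4 + 1) ^ 2 / (golden ^ 2 + 1) ^ 2))"
    by (simp only: PVI_bracket_golden)
  finally have bracket:
    "(1/2 * (complex_of_real ?e * -7 - -7) * complex_of_real ?s + 2 * (complex_of_real ?e + 1))
       / complex_of_real (?s ^ 2)
      = of_real (- ((golden ^ 4 + 1) ^ 2 / (golden ^ 2 + 1) ^ 2))" .
  show ?thesis
    unfolding PVI_d_arg_mu_minus_1[OF golden_nu_nonzero] bracket gamma_closed_form_mult
    by (simp only: mult_minus_right times_divide_eq_right)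
qed

lemma gamma_closed_form_golden:
  "gamma_closed_form (- (pi ^ 2 * (golden ^ 4 + 1) ^ 2 / (golden ^ 2 + 1) ^ 2)) golden_nu
     = exp (-2 * \<i> * d_series_value golden_nu)"
proof -
  define \<theta> where "\<theta> = 16 * golden_nu * ln 2 - 4 * arctan (2 * golden_nu)
                         - 8 * (\<Sum>n. d_series_term golden_nu (Suc n))"
  have "gamma_closed_form (- (pi ^ 2 * (golden ^ 4 + 1) ^ 2 / (golden ^ 2 + 1) ^ 2)) golden_nu
      = - (exp (pi * golden_nu) * cis \<theta>)"
    unfolding gamma_closed_form_polar[OF golden_nu_nonzero golden_nu_abs_less_half]
      mult_minus_left golden_closed_form_modulus \<theta>_def
    by (simp only: of_real_minus mult_minus_left)
  also have "\<dots> = exp (pi * golden_nu) * cis (\<theta> - pi)"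
    by (simp add: cis_divide[symmetric])
  also have "\<dots> = exp (complex_of_real (pi * golden_nu) + \<i> * complex_of_real (\<theta> - pi))"
    by (simp add: cis_conv_exp exp_add flip: exp_of_real)
  also have "complex_of_real (pi * golden_nu) + \<i> * complex_of_real (\<theta> - pi) = -2 * \<i> * d_series_value golden_nu"
    using arccos_eq_arctan[of "2 * golden_nu"] golden_nu_pos
    by (simp add: d_series_value_def \<theta>_def complex_eq_iff power_mult_distrib algebra_simps)
  finally show ?thesis .
qed

theorem proposition7:
  shows "(PVI_nu (-7) = 2 * ln golden / pi) \<and>
         (PVI_d_values (-1) (-7) (-7) (-7) =
           half_i_log_values
             (let \<nu> = PVI_nu (-7) in
              - of_real (pi ^ 2 * (golden ^ 4 + 1) ^ 2 / (golden ^ 2 + 1) ^ 2)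
              * 2 powr (16 * \<i> * of_real \<nu>)
              * ((1 - 2 * \<i> * of_real \<nu>) ^ 2 * of_real (\<nu> ^ 2) / (1 + 2 * \<i> * of_real \<nu>) ^ 2)
              * (Gamma (1 - 2 * \<i> * of_real \<nu>) ^ 4 / Gamma (1 - \<i> * of_real \<nu>) ^ 8))) \<and>
         (\<forall>\<nu>::real. \<bar>\<nu>\<bar> < 1/2 \<longrightarrow> summable (\<lambda>n. \<bar>d_series_term \<nu> (Suc n)\<bar>)) \<and>
         (PVI_d_values (-1) (-7) (-7) (-7) =
           {(let \<nu> = PVI_nu (-7) in
              of_real (pi / 2 - 8 * \<nu> * ln 2 + 2 * arccos (1 / sqrt (1 + 4 * \<nu> ^ 2))
                       + 4 * (\<Sum>n. d_series_term \<nu> (Suc n)))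
              + \<i> * of_real (pi / 2 * \<nu>) + of_int k * of_real pi) | k :: int. True})"
proof (intro conjI)
  show "PVI_nu (-7) = 2 * ln golden / pi"
    unfolding PVI_nu_minus_7 golden_nu_def ..
  show "PVI_d_values (-1) (-7) (-7) (-7) = half_i_log_values
    (let \<nu> = PVI_nu (-7) in
     - of_real (pi ^ 2 * (golden ^ 4 + 1) ^ 2 / (golden ^ 2 + 1) ^ 2) * 2 powr (16 * \<i> * of_real \<nu>)
     * ((1 - 2 * \<i> * of_real \<nu>) ^ 2 * of_real (\<nu> ^ 2) / (1 + 2 * \<i> * of_real \<nu>) ^ 2)
     * (Gamma (1 - 2 * \<i> * of_real \<nu>) ^ 4 / Gamma (1 - \<i> * of_real \<nu>) ^ 8))"
    unfolding PVI_d_values_def PVI_nu_minus_7 PVI_d_arg_golden Let_def gamma_closed_form_def of_real_minus ..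
  show "\<forall>\<nu>::real. \<bar>\<nu>\<bar> < 1/2 \<longrightarrow> summable (\<lambda>n. \<bar>d_series_term \<nu> (Suc n)\<bar>)"
    using summable_abs_d_series_term by blast
  show "PVI_d_values (-1) (-7) (-7) (-7) =
    {(let \<nu> = PVI_nu (-7) in
       of_real (pi / 2 - 8 * \<nu> * ln 2 + 2 * arccos (1 / sqrt (1 + 4 * \<nu> ^ 2))
                + 4 * (\<Sum>n. d_series_term \<nu> (Suc n)))
       + \<i> * of_real (pi / 2 * \<nu>) + of_int k * of_real pi) | k :: int. True}"
    unfolding PVI_d_values_def PVI_nu_minus_7 PVI_d_arg_golden gamma_closed_form_golden
      half_i_log_values_exp Let_def d_series_value_def ..
qed

end
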